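(* Let $G$ be a graph on vertex set $V=\{1,\ldots,N\}$ and $G_l$ a graph on $V$ with $E(G)\subseteq E(G_l)$. Suppose a path $P$ is an induced subgraph of $G$, with vertices $p_1,\ldots,p_n$ labelled in path order, such that $E(P^d)\subseteq E(G_l)$ for some positive integer $d$. If for each $i=1,\ldots,n-d-1$ the pair $\{p_i,p_{i+d}\}$ is focused on $V(P)$ with respect to $G$ and $G_l$, then the forces $\{p_i,p_{i+d}\}\rightarrow\{p_i,p_{i+d+1}\}$, $i=1,\ldots,n-d-1$, may be applied sequentially, and the resulting graph is \[G_{l_1}=G_l+\{\{p_i,p_{i+d+1}\}: 1\le i\le n-d-1\}.\] In particular, for every $A\in\mathcal{S}(G)$ and every $X\in\overline{\mathcal{S}_0}(G_l^c)$ with $AX-XA=0$, one has $X\in\overline{\mathcal{S}_0}(G_{l_1}^c)$.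
   Context: All graphs are finite, simple, undirected. For a graph $G$ on $\{1,\ldots,N\}$, $\mathcal{S}(G)$ is the set of real symmetric $N\times N$ matrices $A=(a_{ij})$ with $a_{ij}\neq0$ iff $\{i,j\}\in E(G)$ for $i\neq j$ (diagonal arbitrary). For a graph $H$ on $\{1,\ldots,N\}$, $\overline{\mathcal{S}_0}(H)$ is the set of real symmetric matrices whose $(i,j)$ entry is zero whenever $i=j$ or $\{i,j\}\notin E(H)$. $H^c$ is the complement of $H$. $P^d$ is the $d$-th power of $P$: the graph on $V(P)$ in which two vertices are adjacent iff their distance in $P$ is at most $d$. $N_G[v]$ is the closed neighbourhood of $v$, and $N_G[v]^c$ its complement in the vertex set. For nonempty $U\subseteq V$ and a graph $G'\supseteq G$ on $V$, a pair $\{i,j\}$ is focused on $U$ with respect to $G$ and $G'$ if $N_G[i]\cap N_{G'}[j]^c\subseteq U$ and $N_G[j]\cap N_{G'}[i]^c\subseteq U$. A force $\{i,j\}\rightarrow\{j,k\}$ with respect to $G$ and a current graph $G'\supseteq G$ on $V$ is valid when $i,j,k$ are pairwise distinct, $k\in N_G[i]$, and $\{i,j\}$ is focused on $\{k\}$ with respect to $G$ and $G'$; applying it replaces $G'$ by $G'+\{j,k\}$. (Known fact used to interpret forces: if $A\in\mathcal{S}(G)$, $X\in\overline{\mathcal{S}_0}(G'^c)$, $AX=XA$ and the force is valid, then $X\in\overline{\mathcal{S}_0}((G'+\{j,k\})^c)$.) *)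

theory Defs
  imports "HOL-Analysis.Analysis"
begin

text \<open>Graphs on the vertex set V = UNIV of a finite type 'n (standing for {1..N}),
  given by their edge sets: sets of 2-element subsets of V.\<close>

definition simple_graph :: "'n set set \<Rightarrow> bool" where
  "simple_graph E \<longleftrightarrow> (\<forall>e\<in>E. card e = 2)"

definition compl_graph :: "'n set set \<Rightarrow> 'n set set" where
  "compl_graph E = {{i, j} | i j. i \<noteq> j \<and> {i, j} \<notin> E}"

definition closed_nbhd :: "'n set set \<Rightarrow> 'n \<Rightarrow> 'n set" where
  "closed_nbhd E v = insert v {u. {u, v} \<in> E}"

definition focused :: "'n set set \<Rightarrow> 'n set set \<Rightarrow> 'n set \<Rightarrow> 'n \<Rightarrow> 'n \<Rightarrow> bool" where
  "focused G G' U i j \<longleftrightarrow>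
     closed_nbhd G i \<inter> - closed_nbhd G' j \<subseteq> U \<and>
     closed_nbhd G j \<inter> - closed_nbhd G' i \<subseteq> U"

definition valid_force :: "'n set set \<Rightarrow> 'n set set \<Rightarrow> 'n \<Rightarrow> 'n \<Rightarrow> 'n \<Rightarrow> bool" where
  "valid_force G G' i j k \<longleftrightarrow>
     i \<noteq> j \<and> j \<noteq> k \<and> i \<noteq> k \<and> k \<in> closed_nbhd G i \<and> focused G G' {k} i j"

text \<open>Apply a list of forces (i,j,k), i.e. {i,j} -> {j,k}, sequentially, each one required
  to be valid with respect to the current graph; None if some force is not valid.\<close>
fun apply_forces :: "'n set set \<Rightarrow> 'n set set \<Rightarrow> ('n \<times> 'n \<times> 'n) list \<Rightarrow> 'n set set option" where
  "apply_forces G G' [] = Some G'"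
| "apply_forces G G' ((i, j, k) # fs) =
     (if valid_force G G' i j k then apply_forces G (G' \<union> {{j, k}}) fs else None)"

definition S_pattern :: "'n set set \<Rightarrow> (real^'n^'n) set" where
  "S_pattern G = {A. transpose A = A \<and> (\<forall>i j. i \<noteq> j \<longrightarrow> (A $ i $ j \<noteq> 0 \<longleftrightarrow> {i, j} \<in> G))}"

definition S0_closure :: "'n set set \<Rightarrow> (real^'n^'n) set" where
  "S0_closure H = {X. transpose X = X \<and> (\<forall>i j. (i = j \<or> {i, j} \<notin> H) \<longrightarrow> X $ i $ j = 0)}"

definition induced_path :: "'n set set \<Rightarrow> (nat \<Rightarrow> 'n) \<Rightarrow> nat \<Rightarrow> bool" where
  "induced_path G p n \<longleftrightarrow> inj_on p {1..n} \<and>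
     (\<forall>i\<in>{1..n}. \<forall>j\<in>{1..n}. {p i, p j} \<in> G \<longleftrightarrow> (i = j + 1 \<or> j = i + 1))"

definition path_power_edges :: "(nat \<Rightarrow> 'n) \<Rightarrow> nat \<Rightarrow> nat \<Rightarrow> 'n set set" where
  "path_power_edges p n d = {{p i, p j} | i j. 1 \<le> i \<and> i < j \<and> j \<le> n \<and> j - i \<le> d}"

end

theory Submission
  imports Defs
begin

text \<open>If \<open>A \<in> S(G)\<close> commutes with \<open>X\<close>, which vanishes on the edges of \<open>G' \<supseteq> G\<close>, and the pair
  \<open>{i,j}\<close> is focused on \<open>{k}\<close>, then every term of \<open>(AX)\<^sub>i\<^sub>j\<close> and \<open>(XA)\<^sub>i\<^sub>j\<close> vanishes except
  \<open>A\<^sub>i\<^sub>k X\<^sub>k\<^sub>j\<close> and \<open>X\<^sub>i\<^sub>k A\<^sub>k\<^sub>j\<close>; the latter is zero because \<open>{i,k} \<in> G\<close>, and \<open>A\<^sub>i\<^sub>k \<noteq> 0\<close>, so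
  \<open>X\<^sub>k\<^sub>j = 0\<close>. Along an induced path whose \<open>d\<close>-th power lies in \<open>G\<^sub>l\<close>, once the edges
  \<open>{p\<^sub>m, p\<^sub>m\<^sub>+\<^sub>d\<^sub>+\<^sub>1}\<close> with \<open>m < a\<close> have been added, every path neighbour of \<open>p\<^sub>a\<close> or \<open>p\<^sub>a\<^sub>+\<^sub>d\<close>
  except \<open>p\<^sub>a\<^sub>+\<^sub>d\<^sub>+\<^sub>1\<close> is already adjacent to the other end of the pair, so focus on \<open>V(P)\<close>
  sharpens to focus on \<open>{p\<^sub>a\<^sub>+\<^sub>d\<^sub>+\<^sub>1}\<close> and the forces can be applied in order.\<close>

lemma mem_closed_nbhd_iff: "u \<in> closed_nbhd E v \<longleftrightarrow> u = v \<or> {u, v} \<in> E"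
  unfolding closed_nbhd_def by auto

lemma mem_S0_closure_compl_graph_iff:
  "X \<in> S0_closure (compl_graph H) \<longleftrightarrow>
     transpose X = X \<and> (\<forall>i j. (i = j \<or> {i, j} \<in> H) \<longrightarrow> X $ i $ j = 0)"
proof -
  have "{i, j} \<notin> compl_graph H \<longleftrightarrow> i = j \<or> {i, j} \<in> H" for i j
    unfolding compl_graph_def by (auto simp: doubleton_eq_iff insert_commute)
  then show ?thesis unfolding S0_closure_def by blast
qed

lemma S_pattern_entry_eq_0:
  assumes "A \<in> S_pattern G" "u \<notin> closed_nbhd G i"
  shows "A $ i $ u = 0"
proof -
  have "u \<noteq> i" "{i, u} \<notin> G"
    using assms(2) by (auto simp: mem_closed_nbhd_iff insert_commute)
  moreover have "\<forall>i j. i \<noteq> j \<longrightarrow> (A $ i $ j \<noteq> 0 \<longleftrightarrow> {i, j} \<in> G)"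
    using assms(1) unfolding S_pattern_def by simp
  ultimately show ?thesis by metis
qed

lemma S_pattern_entry_neq_0:
  assumes "A \<in> S_pattern G" "{i, k} \<in> G" "i \<noteq> k"
  shows "A $ i $ k \<noteq> 0"
  using assms unfolding S_pattern_def by auto

lemma S0_closure_compl_entry_eq_0:
  assumes "X \<in> S0_closure (compl_graph H)" "u \<in> closed_nbhd H j"
  shows "X $ u $ j = 0"
  using assms unfolding mem_S0_closure_compl_graph_iff mem_closed_nbhd_iff by auto

lemma symmetric_matrix_entry_swap:
  assumes "transpose M = M"
  shows "M $ j $ i = M $ i $ j"
  by (metis assms transpose_def vec_lambda_beta)

lemma S0_closure_compl_insert_edge:
  assumes X: "X \<in> S0_closure (compl_graph H)" and "X $ k $ j = 0"
  shows "X \<in> S0_closure (compl_graph (H \<union> {{j, k}}))"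
  unfolding mem_S0_closure_compl_graph_iff
proof (intro conjI allI impI)
  show symm: "transpose X = X"
    using X unfolding mem_S0_closure_compl_graph_iff by blast
  fix a b assume "a = b \<or> {a, b} \<in> H \<union> {{j, k}}"
  then consider "a = b \<or> {a, b} \<in> H" | "a = j \<and> b = k \<or> a = k \<and> b = j"
    by (auto simp: doubleton_eq_iff)
  then show "X $ a $ b = 0"
    using X \<open>X $ k $ j = 0\<close> symmetric_matrix_entry_swap[OF symm, of k j]
    unfolding mem_S0_closure_compl_graph_iff by cases auto
qed

lemma matrix_mult_entry_single_term:
  fixes A B :: "'a::comm_ring_1^'n::finite^'n"
  assumes "\<And>u. u \<noteq> k \<Longrightarrow> A $ i $ u * B $ u $ j = 0"
  shows "(A ** B) $ i $ j = A $ i $ k * B $ k $ j"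
proof -
  have "(A ** B) $ i $ j = (\<Sum>u\<in>UNIV. A $ i $ u * B $ u $ j)"
    by (simp add: matrix_matrix_mult_def)
  also have "\<dots> = A $ i $ k * B $ k $ j + (\<Sum>u\<in>UNIV - {k}. A $ i $ u * B $ u $ j)"
    by (simp add: sum.remove)
  also have "(\<Sum>u\<in>UNIV - {k}. A $ i $ u * B $ u $ j) = 0"
    using assms by (intro sum.neutral) auto
  finally show ?thesis by simp
qed

lemma valid_force_preserves_S0_closure:
  fixes A X :: "real^'n::finite^'n"
  assumes A: "A \<in> S_pattern G" and X: "X \<in> S0_closure (compl_graph G')"
    and comm: "A ** X = X ** A" and "G \<subseteq> G'"
    and force: "valid_force G G' i j k"
  shows "X \<in> S0_closure (compl_graph (G' \<union> {{j, k}}))"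
proof -
  have "i \<noteq> k" and "k \<in> closed_nbhd G i"
    and focus_i: "closed_nbhd G i \<inter> - closed_nbhd G' j \<subseteq> {k}"
    and focus_j: "closed_nbhd G j \<inter> - closed_nbhd G' i \<subseteq> {k}"
    using force unfolding valid_force_def focused_def by auto
  then have edge_ik: "{i, k} \<in> G"
    unfolding mem_closed_nbhd_iff by (auto simp: insert_commute)
  have symm: "transpose A = A" "transpose X = X"
    using A X unfolding S_pattern_def mem_S0_closure_compl_graph_iff by auto
  have X_ik: "X $ i $ k = 0"
    using edge_ik \<open>G \<subseteq> G'\<close> X
    by (intro S0_closure_compl_entry_eq_0) (auto simp: mem_closed_nbhd_iff)
  have "(A ** X) $ i $ j = A $ i $ k * X $ k $ j"
  proof (rule matrix_mult_entry_single_term)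
    fix u assume "u \<noteq> k"
    then have "u \<notin> closed_nbhd G i \<or> u \<in> closed_nbhd G' j" using focus_i by blast
    then show "A $ i $ u * X $ u $ j = 0"
      using S_pattern_entry_eq_0[OF A] S0_closure_compl_entry_eq_0[OF X] by auto
  qed
  moreover have "(X ** A) $ i $ j = X $ i $ k * A $ k $ j"
  proof (rule matrix_mult_entry_single_term)
    fix u assume "u \<noteq> k"
    then have "u \<notin> closed_nbhd G j \<or> u \<in> closed_nbhd G' i" using focus_j by blast
    then show "X $ i $ u * A $ u $ j = 0"
      using S_pattern_entry_eq_0[OF A] S0_closure_compl_entry_eq_0[OF X]
        symmetric_matrix_entry_swap[OF symm(1), of u j] symmetric_matrix_entry_swap[OF symm(2), of u i]
      by auto
  qed
  ultimately have "A $ i $ k * X $ k $ j = 0"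
    using X_ik comm by simp
  then have "X $ k $ j = 0"
    using S_pattern_entry_neq_0[OF A edge_ik \<open>i \<noteq> k\<close>] by simp
  with X show ?thesis by (rule S0_closure_compl_insert_edge)
qed

lemma apply_forces_preserves_S0_closure:
  fixes A X :: "real^'n::finite^'n"
  assumes "apply_forces G G' fs = Some G''" "A \<in> S_pattern G"
    "X \<in> S0_closure (compl_graph G')" "A ** X = X ** A" "G \<subseteq> G'"
  shows "X \<in> S0_closure (compl_graph G'')"
  using assms
proof (induction fs arbitrary: G')
  case Nil
  then show ?case by simp
next
  case (Cons f fs)
  obtain i j k where f: "f = (i, j, k)" by (cases f) auto
  with Cons.prems(1) have "valid_force G G' i j k"
    and rest: "apply_forces G (G' \<union> {{j, k}}) fs = Some G''"
    by (auto split: if_splits)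
  then have "X \<in> S0_closure (compl_graph (G' \<union> {{j, k}}))"
    using valid_force_preserves_S0_closure Cons.prems(2-5) by blast
  with Cons.IH[OF rest Cons.prems(2)] Cons.prems(4,5) show ?case by blast
qed

definition path_forced_edges :: "(nat \<Rightarrow> 'n) \<Rightarrow> nat \<Rightarrow> nat \<Rightarrow> 'n set set" where
  "path_forced_edges p d a = {{p i, p (i + d + 1)} | i. 1 \<le> i \<and> i < a}"

lemma path_forced_edges_Suc:
  assumes "1 \<le> a"
  shows "path_forced_edges p d (Suc a) = path_forced_edges p d a \<union> {{p a, p (a + d + 1)}}"
  using assms unfolding path_forced_edges_def by (auto simp: less_Suc_eq)

lemma induced_path_edge_iff:
  assumes "induced_path G p n" "i \<in> {1..n}" "j \<in> {1..n}"
  shows "{p i, p j} \<in> G \<longleftrightarrow> i = j + 1 \<or> j = i + 1"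
  using assms unfolding induced_path_def by blast

lemma induced_path_closed_nbhd:
  assumes path: "induced_path G p n" and "a \<in> {1..n}" "m \<in> {1..n}"
    and "p m \<in> closed_nbhd G (p a)"
  shows "m = a \<or> m = a + 1 \<or> m + 1 = a"
proof -
  have "p m = p a \<or> {p m, p a} \<in> G"
    using assms(4) by (simp add: mem_closed_nbhd_iff)
  moreover have "p m = p a \<longleftrightarrow> m = a"
    using path assms(2,3) unfolding induced_path_def by (meson inj_on_eq_iff)
  moreover have "{p m, p a} \<in> G \<longleftrightarrow> m = a + 1 \<or> a = m + 1"
    using induced_path_edge_iff[OF path assms(3,2)] .
  ultimately show ?thesis by auto
qed

lemma path_power_edge:
  assumes "path_power_edges p n d \<subseteq> Gl" "1 \<le> i" "i < j" "j \<le> n" "j - i \<le> d"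
  shows "{p i, p j} \<in> Gl"
  using assms unfolding path_power_edges_def by blast

text \<open>The two halves of the focusing condition for the force
  \<open>{p\<^sub>a\<^sub>+\<^sub>d, p\<^sub>a} \<rightarrow> {p\<^sub>a, p\<^sub>a\<^sub>+\<^sub>d\<^sub>+\<^sub>1}\<close>: the path neighbours \<open>p\<^sub>a\<^sub>+\<^sub>d\<^sub>-\<^sub>1\<close> of \<open>p\<^sub>a\<^sub>+\<^sub>d\<close> and \<open>p\<^sub>a\<^sub>+\<^sub>1\<close>
  of \<open>p\<^sub>a\<close> are covered by the path power, \<open>p\<^sub>a\<^sub>-\<^sub>1\<close> by the previously forced edge.\<close>

lemma path_focus_at_end:
  assumes path: "induced_path G p n" and "d \<ge> 1" and power: "path_power_edges p n d \<subseteq> Gl"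
    and focus: "closed_nbhd G (p (a + d)) \<inter> - closed_nbhd Gl (p a) \<subseteq> p ` {1..n}"
    and "1 \<le> a" "a + d + 1 \<le> n" "Gl \<subseteq> G'"
  shows "closed_nbhd G (p (a + d)) \<inter> - closed_nbhd G' (p a) \<subseteq> {p (a + d + 1)}"
proof
  fix v assume v: "v \<in> closed_nbhd G (p (a + d)) \<inter> - closed_nbhd G' (p a)"
  then have "v \<notin> closed_nbhd Gl (p a)"
    using \<open>Gl \<subseteq> G'\<close> by (auto simp: mem_closed_nbhd_iff)
  with v focus obtain m where m: "m \<in> {1..n}" "v = p m" by blast
  have "a + d \<in> {1..n}" using assms(5,6) by simp
  from induced_path_closed_nbhd[OF path this m(1)] v m(2)
  have "m = a + d \<or> m = a + d + 1 \<or> m + 1 = a + d" by blast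
  moreover have "\<not> (m = a + d \<or> m + 1 = a + d)"
  proof
    assume near: "m = a + d \<or> m + 1 = a + d"
    show False
    proof (cases "m = a")
      case True
      with v m(2) show False by (simp add: mem_closed_nbhd_iff)
    next
      case False
      with near \<open>1 \<le> a\<close> \<open>d \<ge> 1\<close> m(1) have "{p a, p m} \<in> Gl"
        by (intro path_power_edge[OF power]) auto
      with v m(2) \<open>Gl \<subseteq> G'\<close> show False
        by (auto simp: mem_closed_nbhd_iff insert_commute)
    qed
  qed
  ultimately show "v \<in> {p (a + d + 1)}" using m(2) by auto
qed

lemma path_focus_at_start:
  assumes path: "induced_path G p n" and "d \<ge> 1" and power: "path_power_edges p n d \<subseteq> Gl"
    and focus: "closed_nbhd G (p a) \<inter> - closed_nbhd Gl (p (a + d)) \<subseteq> p ` {1..n}"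
    and "1 \<le> a" "a + d + 1 \<le> n"
  shows "closed_nbhd G (p a) \<inter> - closed_nbhd (Gl \<union> path_forced_edges p d a) (p (a + d))
           \<subseteq> {p (a + d + 1)}"
proof
  fix v assume v: "v \<in> closed_nbhd G (p a) \<inter> - closed_nbhd (Gl \<union> path_forced_edges p d a) (p (a + d))"
  then have "v \<notin> closed_nbhd Gl (p (a + d))" by (auto simp: mem_closed_nbhd_iff)
  with v focus obtain m where m: "m \<in> {1..n}" "v = p m" by blast
  have "a \<in> {1..n}" using assms(5,6) by simp
  from induced_path_closed_nbhd[OF path this m(1)] v m(2)
  have "m = a \<or> m = a + 1 \<or> m + 1 = a" by blast
  moreover have "m + 1 \<noteq> a"
  proof
    assume "m + 1 = a"
    with m(1) have "{p m, p (a + d)} \<in> path_forced_edges p d a"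
      unfolding path_forced_edges_def by force
    with v m(2) show False by (auto simp: mem_closed_nbhd_iff)
  qed
  moreover have "\<not> (m = a \<or> m = a + 1)"
  proof
    assume near: "m = a \<or> m = a + 1"
    show False
    proof (cases "m = a + d")
      case True
      with v m(2) show False by (simp add: mem_closed_nbhd_iff)
    next
      case False
      with near \<open>1 \<le> a\<close> \<open>d \<ge> 1\<close> \<open>a + d + 1 \<le> n\<close> have "{p m, p (a + d)} \<in> Gl"
        by (intro path_power_edge[OF power]) auto
      with v m(2) show False by (auto simp: mem_closed_nbhd_iff)
    qed
  qed
  ultimately show "v \<in> {p (a + d + 1)}" by blast
qed

lemma valid_force_along_path:
  assumes path: "induced_path G p n" and "d \<ge> 1" and power: "path_power_edges p n d \<subseteq> Gl"
    and focus: "focused G Gl (p ` {1..n}) (p a) (p (a + d))"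
    and "1 \<le> a" "a + d + 1 \<le> n"
  shows "valid_force G (Gl \<union> path_forced_edges p d a) (p (a + d)) (p a) (p (a + d + 1))"
proof -
  have inj: "inj_on p {1..n}"
    using path unfolding induced_path_def by blast
  have "p (a + d) \<noteq> p a" "p a \<noteq> p (a + d + 1)" "p (a + d) \<noteq> p (a + d + 1)"
    using inj_on_eq_iff[OF inj, of "a + d" a] inj_on_eq_iff[OF inj, of a "a + d + 1"]
      inj_on_eq_iff[OF inj, of "a + d" "a + d + 1"] assms(2,5,6) by auto
  moreover have "p (a + d + 1) \<in> closed_nbhd G (p (a + d))"
    using induced_path_edge_iff[OF path, of "a + d + 1" "a + d"] assms(5,6)
    by (simp add: mem_closed_nbhd_iff)
  moreover have "focused G (Gl \<union> path_forced_edges p d a) {p (a + d + 1)} (p (a + d)) (p a)"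
    using path_focus_at_end[OF path \<open>d \<ge> 1\<close> power _ assms(5,6), of "Gl \<union> path_forced_edges p d a"]
      path_focus_at_start[OF path \<open>d \<ge> 1\<close> power _ assms(5,6)] focus
    unfolding focused_def by blast
  ultimately show ?thesis unfolding valid_force_def by blast
qed

lemma apply_forces_along_path:
  assumes path: "induced_path G p n" and "d \<ge> 1" and power: "path_power_edges p n d \<subseteq> Gl"
    and focus: "\<forall>i\<in>{1..n - d - 1}. focused G Gl (p ` {1..n}) (p i) (p (i + d))"
    and "1 \<le> a"
  shows "apply_forces G (Gl \<union> path_forced_edges p d a)
           (map (\<lambda>i. (p (i + d), p i, p (i + d + 1))) [a..<n - d])
         = Some (Gl \<union> path_forced_edges p d (max a (n - d)))"
  using \<open>1 \<le> a\<close>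
proof (induction "n - d - a" arbitrary: a)
  case 0
  then show ?case by (simp add: max_absorb1)
next
  case (Suc k)
  let ?forces = "\<lambda>b. map (\<lambda>i. (p (i + d), p i, p (i + d + 1))) [b..<n - d]"
  have "a < n - d" using Suc.hyps(2) by simp
  then have "a \<in> {1..n - d - 1}" "a + d + 1 \<le> n"
    using Suc.prems by auto
  then have "valid_force G (Gl \<union> path_forced_edges p d a) (p (a + d)) (p a) (p (a + d + 1))"
    using valid_force_along_path[OF path \<open>d \<ge> 1\<close> power] focus Suc.prems by blast
  then have "apply_forces G (Gl \<union> path_forced_edges p d a) (?forces a)
      = apply_forces G (Gl \<union> path_forced_edges p d a \<union> {{p a, p (a + d + 1)}}) (?forces (Suc a))"
    using \<open>a < n - d\<close> by (simp add: upt_conv_Cons)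
  also have "\<dots> = apply_forces G (Gl \<union> path_forced_edges p d (Suc a)) (?forces (Suc a))"
    using path_forced_edges_Suc[OF Suc.prems, of p d] by (simp add: Un_assoc)
  also have "\<dots> = Some (Gl \<union> path_forced_edges p d (max (Suc a) (n - d)))"
    using Suc.hyps by simp
  also have "max (Suc a) (n - d) = max a (n - d)"
    using \<open>a < n - d\<close> by simp
  finally show ?case .
qed

theorem corollary3p6:
  fixes G Gl :: "'n::finite set set" and p :: "nat \<Rightarrow> 'n" and n d :: nat
  assumes "simple_graph G" and "simple_graph Gl" and "G \<subseteq> Gl"
    and "n \<ge> 1" and "induced_path G p n"
    and "d \<ge> 1" and "path_power_edges p n d \<subseteq> Gl"
    and "\<forall>i\<in>{1..n - d - 1}. focused G Gl (p ` {1..n}) (p i) (p (i + d))"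
  shows "apply_forces G Gl (map (\<lambda>i. (p (i + d), p i, p (i + d + 1))) [1..<n - d])
           = Some (Gl \<union> {{p i, p (i + d + 1)} | i. 1 \<le> i \<and> i \<le> n - d - 1})
       \<and> (\<forall>A X. A \<in> S_pattern G \<longrightarrow> X \<in> S0_closure (compl_graph Gl) \<longrightarrow> A ** X - X ** A = 0
            \<longrightarrow> X \<in> S0_closure (compl_graph (Gl \<union> {{p i, p (i + d + 1)} | i. 1 \<le> i \<and> i \<le> n - d - 1})))"
proof -
  have "path_forced_edges p d 1 = {}"
    and "path_forced_edges p d (max 1 (n - d)) = {{p i, p (i + d + 1)} | i. 1 \<le> i \<and> i \<le> n - d - 1}"
    unfolding path_forced_edges_def by (auto simp: max_def)
  then have forces: "apply_forces G Gl (map (\<lambda>i. (p (i + d), p i, p (i + d + 1))) [1..<n - d])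
           = Some (Gl \<union> {{p i, p (i + d + 1)} | i. 1 \<le> i \<and> i \<le> n - d - 1})"
    using apply_forces_along_path[OF assms(5-8), of 1] by simp
  then show ?thesis
    using apply_forces_preserves_S0_closure[OF forces] \<open>G \<subseteq> Gl\<close> by simp
qed

end
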